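(* Let $m_{11},m_{12},m_{13},l_1,l_2\in k$ with $(m_{11},m_{12},m_{13})\neq0$, $m_{12}l_1^2+m_{13}l_2^2=m_{11}$, $l_1\neq0$ and $l_2=0$, and let $M=\begin{pmatrix}m_{11}&m_{12}&m_{13}\\ l_1m_{11}&l_1m_{12}&l_1m_{13}\\ l_2m_{11}&l_2m_{12}&l_2m_{13}\end{pmatrix}$. Then: (1) if $m_{12}\neq0$ and $m_{13}\neq0$, then $\mathcal{A}_{\mathcal{O}_{-1}(k^3)}(M)\cong\mathcal{A}_{\mathcal{O}_{-1}(k^3)}(E_{11}+E_{12}+E_{13}+E_{21}+E_{22}+E_{23})$; (2) if $m_{12}=0$ and $m_{13}\neq0$, then $\mathcal{A}_{\mathcal{O}_{-1}(k^3)}(M)\cong\mathcal{A}_{\mathcal{O}_{-1}(k^3)}(E_{13}+E_{23})$; (3) if $m_{12}\neq0$ and $m_{13}=0$, then $\mathcal{A}_{\mathcal{O}_{-1}(k^3)}(M)\cong\mathcal{A}_{\mathcal{O}_{-1}(k^3)}(E_{11}+E_{12}+E_{21}+E_{22})$.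
   Context: $k$ is an algebraically closed field of characteristic zero. $E_{ij}$ denotes the $3\times3$ matrix unit with $1$ in position $(i,j)$. For $M=(m_{ij})\in M_3(k)$, $\mathcal{A}_{\mathcal{O}_{-1}(k^3)}(M)$ is the connected cochain DG algebra whose underlying graded algebra is generated by degree-one $x_1,x_2,x_3$ subject to $x_ix_j=-x_jx_i$ ($i<j$), with differential determined by $\partial(x_i)=\sum_j m_{ij}x_j^2$ and the Leibniz rule; $\cong$ means isomorphism of DG algebras. *)

theory Defs
  imports "HOL-Computational_Algebra.Polynomial"
begin

text \<open>The graded algebra O_{-1}(k^3): elements are finitely supported coefficient
functions on exponent triples (a1,a2,a3), the triple standing for the
normal-ordered monomial x1^a1 x2^a2 x3^a3.  The relations x_i x_j = - x_j x_i (i<j)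
give  x^a x^b = (-1)^(a2 b1 + a3 b1 + a3 b2) x^(a+b).\<close>

type_synonym 'k elt = "nat \<times> nat \<times> nat \<Rightarrow> 'k"

definition alg_closed :: "'k::field itself \<Rightarrow> bool" where
  "alg_closed _ \<longleftrightarrow> (\<forall>p::'k poly. degree p \<ge> 1 \<longrightarrow> (\<exists>x. poly p x = 0))"

definition carrierO :: "'k::field elt set" where
  "carrierO = {f. finite {a. f a \<noteq> 0}}"

definition mdeg :: "nat \<times> nat \<times> nat \<Rightarrow> nat" where
  "mdeg a = fst a + fst (snd a) + snd (snd a)"

definition homog :: "nat \<Rightarrow> 'k::field elt \<Rightarrow> bool" where
  "homog n f \<longleftrightarrow> (\<forall>a. f a \<noteq> 0 \<longrightarrow> mdeg a = n)"

definition mon :: "nat \<times> nat \<times> nat \<Rightarrow> 'k::field elt" where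
  "mon a = (\<lambda>b. if b = a then 1 else 0)"

definition oneO :: "'k::field elt" where
  "oneO = mon (0,0,0)"

definition msign :: "nat \<times> nat \<times> nat \<Rightarrow> nat \<times> nat \<times> nat \<Rightarrow> 'k::field" where
  "msign a b = (case a of (a1,a2,a3) \<Rightarrow> case b of (b1,b2,b3) \<Rightarrow>
      (-1) ^ (a2*b1 + a3*b1 + a3*b2))"

definition mulO :: "'k::field elt \<Rightarrow> 'k elt \<Rightarrow> 'k elt" where
  "mulO f g = (\<lambda>(c1,c2,c3). \<Sum>i\<le>c1. \<Sum>j\<le>c2. \<Sum>l\<le>c3.
      msign (i,j,l) (c1-i,c2-j,c3-l) * f (i,j,l) * g (c1-i,c2-j,c3-l))"

definition gen :: "nat \<Rightarrow> 'k::field elt" where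
  "gen i = mon (if i = 1 then (1,0,0) else if i = 2 then (0,1,0) else (0,0,1))"

definition sqexp :: "nat \<Rightarrow> nat \<times> nat \<times> nat" where
  "sqexp j = (if j = 1 then (2,0,0) else if j = 2 then (0,2,0) else (0,0,2))"

definition addt :: "nat \<times> nat \<times> nat \<Rightarrow> nat \<times> nat \<times> nat \<Rightarrow> nat \<times> nat \<times> nat" where
  "addt a b = (fst a + fst b, fst (snd a) + fst (snd b), snd (snd a) + snd (snd b))"

text \<open>Matrices M_3(k) as functions on indices 1..3.\<close>
type_synonym 'k mat3 = "nat \<Rightarrow> nat \<Rightarrow> 'k"

text \<open>The differential of A(M) on a monomial x1^a1 x2^a2 x3^a3, obtained from
d(x_i) = sum_j m_ij x_j^2 and the graded Leibniz rule
d(uv) = d(u) v + (-1)^|u| u d(v).  (Since x_j^2 is central,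
d(x_i^n) = [n odd] x_i^(n-1) d(x_i).)\<close>
definition dmon :: "'k::field mat3 \<Rightarrow> nat \<times> nat \<times> nat \<Rightarrow> 'k elt" where
  "dmon M a = (case a of (a1,a2,a3) \<Rightarrow> (\<lambda>c.
       (if odd a1 then (\<Sum>j\<in>{1..3}. M 1 j * mon (addt (a1-1,a2,a3) (sqexp j)) c) else 0)
     + (-1)^a1 * (if odd a2 then (\<Sum>j\<in>{1..3}. M 2 j * mon (addt (a1,a2-1,a3) (sqexp j)) c) else 0)
     + (-1)^(a1+a2) * (if odd a3 then (\<Sum>j\<in>{1..3}. M 3 j * mon (addt (a1,a2,a3-1) (sqexp j)) c) else 0)))"

definition dO :: "'k::field mat3 \<Rightarrow> 'k elt \<Rightarrow> 'k elt" where
  "dO M f = (\<lambda>c. \<Sum>a\<in>{a. f a \<noteq> 0}. f a * dmon M a c)"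

definition dg_iso :: "'k::field mat3 \<Rightarrow> 'k mat3 \<Rightarrow> bool" where
  "dg_iso M N \<longleftrightarrow> (\<exists>\<phi> :: 'k elt \<Rightarrow> 'k elt.
      bij_betw \<phi> carrierO carrierO
    \<and> (\<forall>f\<in>carrierO. \<forall>g\<in>carrierO. \<forall>r.
          \<phi> (\<lambda>c. r * f c + g c) = (\<lambda>c. r * \<phi> f c + \<phi> g c))
    \<and> (\<forall>f\<in>carrierO. \<forall>g\<in>carrierO. \<phi> (mulO f g) = mulO (\<phi> f) (\<phi> g))
    \<and> \<phi> oneO = oneO
    \<and> (\<forall>n. \<forall>f\<in>carrierO. homog n f \<longrightarrow> homog n (\<phi> f))
    \<and> (\<forall>f\<in>carrierO. \<phi> (dO M f) = dO N (\<phi> f)))"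

definition Emat :: "nat \<Rightarrow> nat \<Rightarrow> 'k::field mat3" where
  "Emat i j = (\<lambda>r s. if r = i \<and> s = j then 1 else 0)"

definition msum :: "'k::field mat3 list \<Rightarrow> 'k mat3" where
  "msum Ms = (\<lambda>r s. \<Sum>A\<leftarrow>Ms. A r s)"

end

theory Submission
  imports Defs
begin

text \<open>A diagonal change of generators x_i \<mapsto> c_i x_i (all c_i \<noteq> 0) is an
automorphism of the graded algebra O_{-1}(k^3), acting on a monomial x^a by the weight
c^a = c_1^a1 c_2^a2 c_3^a3.  It transports d(x_i) = \<Sum>_j m_ij x_j^2 to
d(x_i) = \<Sum>_j (m_ij c_j^2 / c_i) x_j^2, so A(M) \<cong> A(N) whenever
n_ij c_i = m_ij c_j^2.  For the rank-one matrices M of the theorem the required c_i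
can be solved for explicitly; only case (1) needs a square root, which exists since
k is algebraically closed.\<close>

definition weight :: "(nat \<Rightarrow> 'k::field) \<Rightarrow> nat \<times> nat \<times> nat \<Rightarrow> 'k" where
  "weight c a = (case a of (a1,a2,a3) \<Rightarrow> c 1 ^ a1 * c 2 ^ a2 * c 3 ^ a3)"

definition rescale :: "(nat \<Rightarrow> 'k::field) \<Rightarrow> 'k elt \<Rightarrow> 'k elt" where
  "rescale c f = (\<lambda>a. weight c a * f a)"

lemma weight_nonzero:
  "c 1 \<noteq> 0 \<Longrightarrow> c 2 \<noteq> 0 \<Longrightarrow> c 3 \<noteq> 0 \<Longrightarrow> weight c a \<noteq> 0"
  by (auto simp: weight_def split: prod.splits)

lemma weight_addt: "weight c (addt a b) = weight c a * weight c b"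
  by (auto simp: weight_def addt_def power_add mult_ac split: prod.splits)

lemma weight_sqexp:
  assumes "j \<in> {1..3}"
  shows "weight c (sqexp j) = c j ^ 2"
proof -
  have "j = 1 \<or> j = 2 \<or> j = 3" using assms by auto
  then show ?thesis by (auto simp: weight_def sqexp_def)
qed

lemma weight_diff:
  assumes "i \<le> a1" "j \<le> a2" "l \<le> a3"
  shows "weight c (a1,a2,a3) = weight c (i,j,l) * weight c (a1-i, a2-j, a3-l)"
proof -
  have "addt (i,j,l) (a1-i, a2-j, a3-l) = (a1,a2,a3)"
    using assms by (simp add: addt_def)
  then show ?thesis by (metis weight_addt)
qed

lemma weight_odd_exponent:
  assumes "odd n"
  shows "weight c (n,a2,a3) = weight c (n-1,a2,a3) * c 1"
    and "weight c (a1,n,a3) = weight c (a1,n-1,a3) * c 2"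
    and "weight c (a1,a2,n) = weight c (a1,a2,n-1) * c 3"
proof -
  have "x ^ n = x ^ (n-1) * x" for x :: 'a
    using assms by (metis odd_pos power_minus_mult)
  then show "weight c (n,a2,a3) = weight c (n-1,a2,a3) * c 1"
    and "weight c (a1,n,a3) = weight c (a1,n-1,a3) * c 2"
    and "weight c (a1,a2,n) = weight c (a1,a2,n-1) * c 3"
    by (simp_all add: weight_def mult_ac)
qed

lemma rescale_row:
  fixes M N :: "'k::field mat3"
  assumes MN: "\<forall>i\<in>{1..3}. \<forall>j\<in>{1..3}. N i j * c i = M i j * c j ^ 2"
    and i: "i \<in> {1..3}"
  shows "weight c e * (\<Sum>j\<in>{1..3}. M i j * mon (addt b (sqexp j)) e)
       = weight c b * c i * (\<Sum>j\<in>{1..3}. N i j * mon (addt b (sqexp j)) e)"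
  unfolding sum_distrib_left
proof (rule sum.cong)
  fix j :: nat assume j: "j \<in> {1..3}"
  have "N i j * c i = M i j * c j ^ 2" using MN i j by blast
  then show "weight c e * (M i j * mon (addt b (sqexp j)) e)
           = weight c b * c i * (N i j * mon (addt b (sqexp j)) e)"
    using j by (auto simp: mon_def weight_addt weight_sqexp mult_ac)
qed simp

lemma weight_dmon:
  fixes M N :: "'k::field mat3"
  assumes MN: "\<forall>i\<in>{1..3}. \<forall>j\<in>{1..3}. N i j * c i = M i j * c j ^ 2"
  shows "weight c e * dmon M a e = weight c a * dmon N a e"
proof -
  obtain a1 a2 a3 where a: "a = (a1,a2,a3)" by (cases a) auto
  note row = rescale_row[OF MN, of _ e]
  have row1: "weight c e * (if odd a1 then \<Sum>j\<in>{1..3}. M 1 j * mon (addt (a1-1,a2,a3) (sqexp j)) e else 0)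
      = weight c a * (if odd a1 then \<Sum>j\<in>{1..3}. N 1 j * mon (addt (a1-1,a2,a3) (sqexp j)) e else 0)"
    using row[of 1] weight_odd_exponent(1)[of a1 c a2 a3] by (simp add: a)
  have row2: "weight c e * (if odd a2 then \<Sum>j\<in>{1..3}. M 2 j * mon (addt (a1,a2-1,a3) (sqexp j)) e else 0)
      = weight c a * (if odd a2 then \<Sum>j\<in>{1..3}. N 2 j * mon (addt (a1,a2-1,a3) (sqexp j)) e else 0)"
    using row[of 2] weight_odd_exponent(2)[of a2 c a1 a3] by (simp add: a)
  have row3: "weight c e * (if odd a3 then \<Sum>j\<in>{1..3}. M 3 j * mon (addt (a1,a2,a3-1) (sqexp j)) e else 0)
      = weight c a * (if odd a3 then \<Sum>j\<in>{1..3}. N 3 j * mon (addt (a1,a2,a3-1) (sqexp j)) e else 0)"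
    using row[of 3] weight_odd_exponent(3)[of a3 c a1 a2] by (simp add: a)
  show ?thesis
    unfolding dmon_def a prod.case using row1 row2 row3
    by (simp only: distrib_left a[symmetric] mult.left_commute[of "weight c e"]
        mult.left_commute[of "weight c a"])
qed

lemma rescale_mulO: "rescale c (mulO f g) = mulO (rescale c f) (rescale c g)"
proof
  fix e :: "nat \<times> nat \<times> nat"
  obtain e1 e2 e3 where "e = (e1,e2,e3)" by (cases e) auto
  then show "rescale c (mulO f g) e = mulO (rescale c f) (rescale c g) e"
    by (simp add: rescale_def mulO_def sum_distrib_left weight_diff mult_ac)
qed

lemma rescale_dO:
  assumes "\<forall>i\<in>{1..3}. \<forall>j\<in>{1..3}. N i j * c i = M i j * c j ^ 2"
    and "\<And>a. weight c a \<noteq> 0"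
  shows "rescale c (dO M f) = dO N (rescale c f)"
proof
  fix e
  have "rescale c (dO M f) e = (\<Sum>a\<in>{a. f a \<noteq> 0}. f a * (weight c e * dmon M a e))"
    by (simp add: rescale_def dO_def sum_distrib_left mult_ac)
  also have "\<dots> = (\<Sum>a\<in>{a. f a \<noteq> 0}. rescale c f a * dmon N a e)"
    by (simp add: weight_dmon[OF assms(1)] rescale_def mult_ac)
  also have "\<dots> = dO N (rescale c f) e"
    using assms(2) by (simp add: dO_def rescale_def)
  finally show "rescale c (dO M f) e = dO N (rescale c f) e" .
qed

lemma bij_betw_rescale:
  assumes "\<And>a. weight c a \<noteq> 0"
  shows "bij_betw (rescale c) carrierO carrierO"
proof (rule bij_betw_byWitness[where f' = "rescale (\<lambda>i. inverse (c i))"])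
  have weight_inverse: "weight (\<lambda>i. inverse (c i)) a = inverse (weight c a)" for a
    by (auto simp: weight_def power_inverse split: prod.splits)
  show "\<forall>f\<in>carrierO. rescale (\<lambda>i. inverse (c i)) (rescale c f) = f"
    and "\<forall>f\<in>carrierO. rescale c (rescale (\<lambda>i. inverse (c i)) f) = f"
    using assms by (simp_all add: rescale_def weight_inverse mult.assoc[symmetric])
  show "rescale c ` carrierO \<subseteq> carrierO"
    and "rescale (\<lambda>i. inverse (c i)) ` carrierO \<subseteq> carrierO"
    using assms by (auto simp: carrierO_def rescale_def weight_inverse)
qed

lemma dg_iso_rescale:
  fixes M N :: "'k::field mat3"
  assumes MN: "\<forall>i\<in>{1..3}. \<forall>j\<in>{1..3}. N i j * c i = M i j * c j ^ 2"
    and "c 1 \<noteq> 0" "c 2 \<noteq> 0" "c 3 \<noteq> 0"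
  shows "dg_iso M N"
  unfolding dg_iso_def
proof (intro exI conjI)
  have nonzero: "\<And>a. weight c a \<noteq> 0" using assms weight_nonzero by blast
  show "bij_betw (rescale c) carrierO carrierO" using bij_betw_rescale[OF nonzero] .
  show "\<forall>f\<in>carrierO. \<forall>g\<in>carrierO. \<forall>r.
          rescale c (\<lambda>e. r * f e + g e) = (\<lambda>e. r * rescale c f e + rescale c g e)"
    by (simp add: rescale_def algebra_simps)
  show "\<forall>f\<in>carrierO. \<forall>g\<in>carrierO. rescale c (mulO f g) = mulO (rescale c f) (rescale c g)"
    by (simp add: rescale_mulO)
  show "rescale c oneO = oneO"
    by (auto simp: rescale_def oneO_def mon_def weight_def)
  show "\<forall>n. \<forall>f\<in>carrierO. homog n f \<longrightarrow> homog n (rescale c f)"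
    by (simp add: homog_def rescale_def)
  show "\<forall>f\<in>carrierO. rescale c (dO M f) = dO N (rescale c f)"
    using rescale_dO[OF MN nonzero] by blast
qed

lemma alg_closed_square_root:
  fixes x :: "'k::field"
  assumes "alg_closed TYPE('k)"
  obtains s where "s ^ 2 = x"
proof -
  have "degree [:- x, 0, 1:] \<ge> 1" by simp
  then obtain s where "poly [:- x, 0, 1:] s = 0"
    using assms unfolding alg_closed_def by blast
  then show ?thesis using that by (simp add: power2_eq_square)
qed

theorem lemma7p2:
  fixes m11 m12 m13 l1 l2 :: "'k::field_char_0"
    and M :: "'k mat3"
  assumes "alg_closed TYPE('k)"
    and "(m11, m12, m13) \<noteq> (0, 0, 0)"
    and "m12 * l1^2 + m13 * l2^2 = m11"
    and "l1 \<noteq> 0" and "l2 = 0"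
    and "M = (\<lambda>i j. (if i = 1 then 1 else if i = 2 then l1 else l2) *
                    (if j = 1 then m11 else if j = 2 then m12 else m13))"
  shows "(m12 \<noteq> 0 \<and> m13 \<noteq> 0 \<longrightarrow>
            dg_iso M (msum [Emat 1 1, Emat 1 2, Emat 1 3, Emat 2 1, Emat 2 2, Emat 2 3]))
       \<and> (m12 = 0 \<and> m13 \<noteq> 0 \<longrightarrow> dg_iso M (msum [Emat 1 3, Emat 2 3]))
       \<and> (m12 \<noteq> 0 \<and> m13 = 0 \<longrightarrow>
            dg_iso M (msum [Emat 1 1, Emat 1 2, Emat 2 1, Emat 2 2]))"
proof -
  have m11: "m11 = m12 * l1^2" using assms(3,5) by simp
  have M: "M = (\<lambda>i j. (if i = 1 then 1 else if i = 2 then l1 else 0) *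
                    (if j = 1 then m12 * l1^2 else if j = 2 then m12 else m13))"
    unfolding assms(5,6) m11 by simp
  show ?thesis
  proof (intro conjI impI)
    assume "m12 \<noteq> 0 \<and> m13 \<noteq> 0"
    moreover obtain s where "s ^ 2 = 1 / (m12 * m13 * l1^2)"
      using alg_closed_square_root[OF assms(1)] .
    ultimately show "dg_iso M (msum [Emat 1 1, Emat 1 2, Emat 1 3, Emat 2 1, Emat 2 2, Emat 2 3])"
      using assms(4)
      by (intro dg_iso_rescale[where c = "\<lambda>i. if i = 1 then 1/(m12*l1^2) else if i = 2 then 1/(m12*l1) else s"])
         (auto simp: M msum_def Emat_def field_simps power2_eq_square)
  next
    assume "m12 = 0 \<and> m13 \<noteq> 0"
    then show "dg_iso M (msum [Emat 1 3, Emat 2 3])"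
      using assms(4)
      by (intro dg_iso_rescale[where c = "\<lambda>i. if i = 1 then m13 else if i = 2 then l1*m13 else 1"])
         (auto simp: M msum_def Emat_def field_simps power2_eq_square)
  next
    assume "m12 \<noteq> 0 \<and> m13 = 0"
    then show "dg_iso M (msum [Emat 1 1, Emat 1 2, Emat 2 1, Emat 2 2])"
      using assms(4)
      by (intro dg_iso_rescale[where c = "\<lambda>i. if i = 1 then 1/(m12*l1^2) else if i = 2 then 1/(m12*l1) else 1"])
         (auto simp: M msum_def Emat_def field_simps power2_eq_square)
  qed
qed

end
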